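(* The minimizer $\hat{\mathbf{w}}$ of the criterion $\hat d_\lambda(\mathbf{w})$ is unique with probability one, and is given by $$\hat{\mathbf{w}}_{\hat{\mathcal{E}}} = \hat{\mathbf{J}}_{\hat{\mathcal{E}}}^{-1}\left[\mathrm{diag}\{\hat{\mathbf{J}}_{\hat{\mathcal{E}}}\} - \frac{\lambda}{n}\boldsymbol{\eta}\right], \qquad \hat{\mathbf{w}}_{\setminus\hat{\mathcal{E}}} = 0,$$ where $\boldsymbol{\eta}$ is the sub-gradient of the weighted $L_1$-norm $\sum_{j<k}|w_{jk}|/S_{jk}^2$, i.e. $$\eta_{jk} = \frac{1}{S_{jk}^2}\times\begin{cases} 0, & j=k,\\ 1, & j\neq k,\ w_{jk}>0,\\ -1, & j\neq k,\ w_{jk}<0,\\ \in[-1,1], & j\neq k,\ w_{jk}=0,\end{cases}$$ and $$\hat{\mathcal{E}} = \left\{ jk : \left|\mathrm{diag}\{\hat{\mathbf{J}}\}_{jk} - \hat{\mathbf{J}}_{jk,\cdot}\hat{\mathbf{w}}\right| \ge \frac{\lambda}{n S_{jk}^2}\mathbb{I}(j\neq k)\right\},$$ where $\setminus\hat{\mathcal{E}}$ denotes the complement index set $\{jk: 1\le j\le k\le p\}\setminus\hat{\mathcal{E}}$, $\mathbb{I}(\cdot)$ is the indicator function, $\hat{\mathbf{J}}_{jk,\cdot}$ is the row of $\hat{\mathbf{J}}$ corresponding to index $jk$, and $\mathrm{diag}\{\hat{\mathbf{J}}\}_{jk}$ is the element of $\mathrm{diag}\{\hat{\mathbf{J}}\}$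 corresponding to index $jk$.
   Context: Let $\boldsymbol{X}=(X_1,\dots,X_p)^\top$ be a $p$-variate random vector with zero mean and positive definite covariance $\boldsymbol{\Theta}=(\theta_{jk})$, and let $\boldsymbol{\theta}=\mathrm{vech}(\boldsymbol{\Theta})$, a vector of length $m=p(p+1)/2$. Given an i.i.d. sample $\boldsymbol{X}^{(1)},\dots,\boldsymbol{X}^{(n)}$, let $\mathbf{S}=(S_{jk}) = n^{-1}\sum_{i=1}^n \boldsymbol{X}^{(i)}\boldsymbol{X}^{(i)\top}$ and $\mathbf{s}=\mathrm{vech}(\mathbf{S})$. For $j=1,\dots,p$ let $\ell_{jj}(\boldsymbol{\theta};\boldsymbol{X}) = -\log\theta_{jj} - X_j^2/\theta_{jj}$ and for $j<k$ let $\ell_{jk}(\boldsymbol{\theta};\boldsymbol{X}) = -\log(\theta_{jj}\theta_{kk}-\theta_{jk}^2) - (\theta_{kk}X_j^2 - 2\theta_{jk}X_jX_k + \theta_{jj}X_k^2)/(\theta_{jj}\theta_{kk}-\theta_{jk}^2)$ be the univariate and bivariate Gaussian log-likelihood contributions, and let $\mathbf{u}_{jk}(\boldsymbol{\theta};\boldsymbol{X}) = \partial\ell_{jk}(\boldsymbol{\theta};\boldsymbol{X})/\partial\boldsymbol{\theta}\in\mathbb{R}^m$ ($j\le k$) be the corresponding score vectors (the marginal score $\mathbf{u}_{jj}$ has a single nonzero entry, the one for $\theta_{jj}$; the bivariate score $\mathbf{u}_{jk}$ has three nonzero entries, those for $\theta_{jj},\theta_{kk},\theta_{jk}$). Let $\mathbf{U}(\boldsymbol{\theta};\boldsymbol{X})$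 be the $m\times m$ matrix whose columns are the scores $\{\mathbf{u}_{jk}, j\le k\}$, so the pairwise likelihood score with coefficient vector $\mathbf{w}=(w_{jk})_{j\le k}\in\mathbb{R}^m$ is $\mathbf{U}(\boldsymbol{\theta};\boldsymbol{X})\mathbf{w}=\sum_{j\le k} w_{jk}\mathbf{u}_{jk}$. Define the plug-in score covariance matrix $\hat{\mathbf{J}} = n^{-1}\sum_{i=1}^n \mathbf{U}(\mathbf{s};\boldsymbol{X}^{(i)})^\top\mathbf{U}(\mathbf{s};\boldsymbol{X}^{(i)})$, and, for $\lambda\ge 0$, the empirical criterion $\hat d_\lambda(\mathbf{w}) = \frac12\mathbf{w}^\top\hat{\mathbf{J}}\mathbf{w} - \mathbf{w}^\top\mathrm{diag}\{\hat{\mathbf{J}}\} + \frac{\lambda}{n}\sum_{j<k}\frac{|w_{jk}|}{S_{jk}^2}$, where $\mathrm{diag}\{\hat{\mathbf{J}}\}$ is the vector of diagonal entries of $\hat{\mathbf{J}}$. For an index set $\mathcal{E}\subseteq\{jk:1\le j\le k\le p\}$, $\mathbf{a}_{\mathcal{E}}$ denotes the sub-vector of $\mathbf{a}\in\mathbb{R}^m$ indexed by $\mathcal{E}$ and $\mathbf{M}_{\mathcal{E}}$ the sub-matrix of an $m\times m$ matrix $\mathbf{M}$ with rows and columns in $\mathcal{E}$. *)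

theory Defs
  imports "HOL-Probability.Probability"
begin

(* Index set {jk : j <= k}; coordinates of R^m are indexed by pairs (j,k) with j <= k. *)
definition idx :: "('p::{finite,linorder} \<times> 'p::{finite,linorder}) set" where
  "idx = {(j,k). j \<le> k}"

(* vectors in R^m: functions on pairs vanishing outside idx *)
definition vecs :: "(('p::{finite,linorder} \<times> 'p::{finite,linorder}) \<Rightarrow> real) set" where
  "vecs = {w. \<forall>a. a \<notin> idx \<longrightarrow> w a = 0}"

(* univariate / bivariate Gaussian log-likelihood contributions; theta (j,k) = theta_jk for j <= k *)
definition ell :: "'p::{finite,linorder} \<Rightarrow> 'p::{finite,linorder} \<Rightarrow> ('p::{finite,linorder} \<times> 'p::{finite,linorder} \<Rightarrow> real) \<Rightarrow> real^'p::{finite,linorder} \<Rightarrow> real" where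
  "ell j k \<theta> x =
     (if j = k then - ln (\<theta> (j,j)) - (x$j)^2 / \<theta> (j,j)
      else - ln (\<theta> (j,j) * \<theta> (k,k) - (\<theta> (j,k))^2)
           - (\<theta> (k,k) * (x$j)^2 - 2 * \<theta> (j,k) * (x$j) * (x$k) + \<theta> (j,j) * (x$k)^2)
             / (\<theta> (j,j) * \<theta> (k,k) - (\<theta> (j,k))^2))"

definition score :: "'p::{finite,linorder} \<Rightarrow> 'p::{finite,linorder} \<Rightarrow> ('p::{finite,linorder} \<times> 'p::{finite,linorder} \<Rightarrow> real) \<Rightarrow> real^'p::{finite,linorder} \<Rightarrow> ('p::{finite,linorder} \<times> 'p::{finite,linorder}) \<Rightarrow> real" where
  "score j k \<theta> x ab = (if ab \<in> idx then deriv (\<lambda>t. ell j k (\<theta>(ab := t)) x) (\<theta> ab) else 0)"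

definition Umat :: "('p::{finite,linorder} \<times> 'p::{finite,linorder} \<Rightarrow> real) \<Rightarrow> real^'p::{finite,linorder} \<Rightarrow> ('p::{finite,linorder} \<times> 'p::{finite,linorder}) \<Rightarrow> ('p::{finite,linorder} \<times> 'p::{finite,linorder}) \<Rightarrow> real" where
  "Umat \<theta> x ab c = score (fst c) (snd c) \<theta> x ab"

definition Smat :: "nat \<Rightarrow> (nat \<Rightarrow> real^'p::{finite,linorder}) \<Rightarrow> 'p::{finite,linorder} \<times> 'p::{finite,linorder} \<Rightarrow> real" where
  "Smat n X jk = (if jk \<in> idx then (1 / real n) * (\<Sum>i<n. (X i)$(fst jk) * (X i)$(snd jk)) else 0)"

definition Jhat :: "nat \<Rightarrow> (nat \<Rightarrow> real^'p::{finite,linorder}) \<Rightarrow> ('p::{finite,linorder} \<times> 'p::{finite,linorder}) \<Rightarrow> ('p::{finite,linorder} \<times> 'p::{finite,linorder}) \<Rightarrow> real" where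
  "Jhat n X a b = (if a \<in> idx \<and> b \<in> idx then
      (1 / real n) * (\<Sum>i<n. \<Sum>c\<in>idx. Umat (Smat n X) (X i) c a * Umat (Smat n X) (X i) c b)
    else 0)"

definition dhat :: "real \<Rightarrow> nat \<Rightarrow> (nat \<Rightarrow> real^'p::{finite,linorder}) \<Rightarrow> ('p::{finite,linorder} \<times> 'p::{finite,linorder} \<Rightarrow> real) \<Rightarrow> real" where
  "dhat lam n X w =
     (1/2) * (\<Sum>a\<in>idx. \<Sum>b\<in>idx. w a * Jhat n X a b * w b)
     - (\<Sum>a\<in>idx. w a * Jhat n X a a)
     + (lam / real n) * (\<Sum>jk\<in>{(j,k). j < k}. \<bar>w jk\<bar> / (Smat n X jk)^2)"

definition is_minimizer :: "real \<Rightarrow> nat \<Rightarrow> (nat \<Rightarrow> real^'p::{finite,linorder}) \<Rightarrow> ('p::{finite,linorder} \<times> 'p::{finite,linorder} \<Rightarrow> real) \<Rightarrow> bool" where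
  "is_minimizer lam n X w \<longleftrightarrow> w \<in> vecs \<and> (\<forall>v\<in>vecs. dhat lam n X w \<le> dhat lam n X v)"

definition is_subgrad :: "nat \<Rightarrow> (nat \<Rightarrow> real^'p::{finite,linorder}) \<Rightarrow> ('p::{finite,linorder} \<times> 'p::{finite,linorder} \<Rightarrow> real) \<Rightarrow> ('p::{finite,linorder} \<times> 'p::{finite,linorder} \<Rightarrow> real) \<Rightarrow> bool" where
  "is_subgrad n X w \<eta> \<longleftrightarrow>
     (\<forall>j k. j \<le> k \<longrightarrow>
        (if j = k then \<eta> (j,k) = 0
         else if w (j,k) > 0 then \<eta> (j,k) = 1 / (Smat n X (j,k))^2
         else if w (j,k) < 0 then \<eta> (j,k) = - 1 / (Smat n X (j,k))^2
         else (\<exists>t. -1 \<le> t \<and> t \<le> 1 \<and> \<eta> (j,k) = t / (Smat n X (j,k))^2)))"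

definition is_inverse_on :: "'i set \<Rightarrow> ('i \<Rightarrow> 'i \<Rightarrow> real) \<Rightarrow> ('i \<Rightarrow> 'i \<Rightarrow> real) \<Rightarrow> bool" where
  "is_inverse_on E A B \<longleftrightarrow>
     (\<forall>a\<in>E. \<forall>c\<in>E. (\<Sum>b\<in>E. A a b * B b c) = (if a = c then 1 else 0)) \<and>
     (\<forall>a\<in>E. \<forall>c\<in>E. (\<Sum>b\<in>E. B a b * A b c) = (if a = c then 1 else 0))"

definition invertible_on :: "'i set \<Rightarrow> ('i \<Rightarrow> 'i \<Rightarrow> real) \<Rightarrow> bool" where
  "invertible_on E A \<longleftrightarrow> (\<exists>B. is_inverse_on E A B)"

definition mat_inv_on :: "'i set \<Rightarrow> ('i \<Rightarrow> 'i \<Rightarrow> real) \<Rightarrow> ('i \<Rightarrow> 'i \<Rightarrow> real)" where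
  "mat_inv_on E A = (SOME B. is_inverse_on E A B)"

definition Ehat :: "real \<Rightarrow> nat \<Rightarrow> (nat \<Rightarrow> real^'p::{finite,linorder}) \<Rightarrow> ('p::{finite,linorder} \<times> 'p::{finite,linorder} \<Rightarrow> real) \<Rightarrow> ('p::{finite,linorder} \<times> 'p::{finite,linorder}) set" where
  "Ehat lam n X w = {jk\<in>idx.
      \<bar>Jhat n X jk jk - (\<Sum>b\<in>idx. Jhat n X jk b * w b)\<bar>
        \<ge> lam / (real n * (Smat n X jk)^2) * (if fst jk \<noteq> snd jk then 1 else 0)}"

end

(*
  Write the criterion as  F(w) = w'Jw/2 - w'diag J + sum_(j<k) c_jk |w_jk|  with weights c >= 0.
  Everything deterministic follows once J is positive definite on the index set: F is then
  coercive and has a minimiser; a minimiser satisfies the coordinatewise subgradient (KKT)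
  conditions; these give F v - F w >= (v - w)'J(v - w)/2, hence uniqueness; and on the active
  set E they read  J_E w_E = diag J_E - (lambda/n) eta,  which the invertible block J_E solves.

  J dominates U'U/n for the score matrix U of the first observation X 0. Ordering the
  off-diagonal indices before the diagonal ones makes U triangular, so J is positive definite
  as soon as the diagonal entries of U are nonzero. Given the other observations, each such
  entry vanishes only where a nonzero polynomial in one coordinate of X 0 does, which is a
  Lebesgue null set; by independence and absolute continuity this happens with probability 0.
*)
theory Submission
  imports Defs
begin

section \<open>Quadratic minimisation with a weighted \<open>\<ell>\<^sub>1\<close> penalty\<close>

definition quad_form :: "'i set \<Rightarrow> ('i \<Rightarrow> 'i \<Rightarrow> real) \<Rightarrow> ('i \<Rightarrow> real) \<Rightarrow> real" where
  "quad_form I J v = (\<Sum>a\<in>I. \<Sum>b\<in>I. v a * J a b * v b)"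

definition pos_def_on :: "'i set \<Rightarrow> ('i \<Rightarrow> 'i \<Rightarrow> real) \<Rightarrow> bool" where
  "pos_def_on I J \<longleftrightarrow> (\<forall>v. (\<exists>a\<in>I. v a \<noteq> 0) \<longrightarrow> quad_form I J v > 0)"

definition vanishing_outside :: "'i set \<Rightarrow> ('i \<Rightarrow> real) set" where
  "vanishing_outside I = {v. \<forall>a. a \<notin> I \<longrightarrow> v a = 0}"

definition penalized_obj ::
    "'i set \<Rightarrow> 'i set \<Rightarrow> ('i \<Rightarrow> 'i \<Rightarrow> real) \<Rightarrow> ('i \<Rightarrow> real) \<Rightarrow> ('i \<Rightarrow> real) \<Rightarrow> real" where
  "penalized_obj I P J c w = quad_form I J w / 2 - (\<Sum>a\<in>I. w a * J a a) + (\<Sum>a\<in>P. c a * \<bar>w a\<bar>)"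

text \<open>Minus the gradient of the smooth part of \<^const>\<open>penalized_obj\<close>.\<close>
definition residual :: "'i set \<Rightarrow> ('i \<Rightarrow> 'i \<Rightarrow> real) \<Rightarrow> ('i \<Rightarrow> real) \<Rightarrow> 'i \<Rightarrow> real" where
  "residual I J w a = J a a - (\<Sum>b\<in>I. J a b * w b)"

definition kkt :: "'i set \<Rightarrow> 'i set \<Rightarrow> ('i \<Rightarrow> 'i \<Rightarrow> real) \<Rightarrow> ('i \<Rightarrow> real) \<Rightarrow> ('i \<Rightarrow> real) \<Rightarrow> bool" where
  "kkt I P J c w \<longleftrightarrow>
     (\<forall>a\<in>I - P. residual I J w a = 0) \<and>
     (\<forall>a\<in>P. (w a \<noteq> 0 \<longrightarrow> residual I J w a = sgn (w a) * c a) \<and>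
            (w a = 0 \<longrightarrow> \<bar>residual I J w a\<bar> \<le> c a))"

lemma quad_form_expand:
  assumes sym: "\<And>a b. a \<in> I \<Longrightarrow> b \<in> I \<Longrightarrow> J a b = J b a"
  shows "quad_form I J v = quad_form I J w + 2 * (\<Sum>a\<in>I. (v a - w a) * (\<Sum>b\<in>I. J a b * w b))
           + quad_form I J (\<lambda>a. v a - w a)"
proof -
  define d where "d a = v a - w a" for a
  have v: "v a = w a + d a" for a by (simp add: d_def)
  have "quad_form I J v = quad_form I J w + (\<Sum>a\<in>I. \<Sum>b\<in>I. w a * J a b * d b)
      + (\<Sum>a\<in>I. \<Sum>b\<in>I. d a * J a b * w b) + quad_form I J d"
    unfolding quad_form_def v by (simp add: algebra_simps sum.distrib)
  also have "(\<Sum>a\<in>I. \<Sum>b\<in>I. w a * J a b * d b) = (\<Sum>a\<in>I. \<Sum>b\<in>I. d a * J a b * w b)"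
    by (subst sum.swap) (intro sum.cong refl, simp add: sym mult.commute)
  also have "(\<Sum>a\<in>I. \<Sum>b\<in>I. d a * J a b * w b) = (\<Sum>a\<in>I. d a * (\<Sum>b\<in>I. J a b * w b))"
    by (simp add: sum_distrib_left mult.assoc)
  finally show ?thesis by (simp add: d_def)
qed

lemma quad_form_sum: "quad_form I (\<lambda>a b. \<Sum>k\<in>K. M k a b) v = (\<Sum>k\<in>K. quad_form I (M k) v)"
  unfolding quad_form_def by (simp add: sum_distrib_left sum_distrib_right sum.swap[of _ K])

lemma quad_form_scale: "quad_form I (\<lambda>a b. r * M a b) v = r * quad_form I M v"
  unfolding quad_form_def by (simp add: sum_distrib_left mult_ac)

lemma quad_form_rank_one: "quad_form I (\<lambda>a b. u a * u b) v = (\<Sum>a\<in>I. u a * v a)\<^sup>2"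
  unfolding quad_form_def power2_eq_square sum_product by (simp add: mult_ac)

lemma penalized_obj_diff:
  assumes "\<And>a b. a \<in> I \<Longrightarrow> b \<in> I \<Longrightarrow> J a b = J b a"
  shows "penalized_obj I P J c v - penalized_obj I P J c w =
           quad_form I J (\<lambda>a. v a - w a) / 2 - (\<Sum>a\<in>I. (v a - w a) * residual I J w a)
           + (\<Sum>a\<in>P. c a * (\<bar>v a\<bar> - \<bar>w a\<bar>))"
proof -
  have "(\<Sum>a\<in>I. (v a - w a) * residual I J w a) =
      (\<Sum>a\<in>I. v a * J a a) - (\<Sum>a\<in>I. w a * J a a)
      - (\<Sum>a\<in>I. (v a - w a) * (\<Sum>b\<in>I. J a b * w b))"
    by (simp add: residual_def algebra_simps sum_subtractf sum.distrib)
  then show ?thesis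
    using quad_form_expand[of I J v w, OF assms]
    by (simp add: penalized_obj_def sum_subtractf algebra_simps)
qed

lemma abs_subgradient_ineq:
  fixes v w g c :: real
  assumes "w \<noteq> 0 \<longrightarrow> g = sgn w * c" and "w = 0 \<longrightarrow> \<bar>g\<bar> \<le> c" and "c \<ge> 0"
  shows "(v - w) * g \<le> c * (\<bar>v\<bar> - \<bar>w\<bar>)"
proof (cases "w = 0")
  case True
  have "v * g \<le> \<bar>v\<bar> * \<bar>g\<bar>" by (metis abs_ge_self abs_mult)
  also have "\<dots> \<le> \<bar>v\<bar> * c" using assms True by (simp add: mult_left_mono)
  finally show ?thesis using True by (simp add: mult.commute)
next
  case False
  then have "g = sgn w * c" using assms by simp
  moreover have "sgn w * v \<le> \<bar>v\<bar>" "sgn w * w = \<bar>w\<bar>"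
    by (auto simp: sgn_if abs_if)
  ultimately show ?thesis using \<open>c \<ge> 0\<close>
    by (simp add: algebra_simps) (metis mult_left_mono)
qed

lemma kkt_obj_gap:
  assumes fin: "finite I" and PI: "P \<subseteq> I"
    and sym: "\<And>a b. a \<in> I \<Longrightarrow> b \<in> I \<Longrightarrow> J a b = J b a"
    and K: "kkt I P J c w" and c: "\<And>a. a \<in> P \<Longrightarrow> c a \<ge> 0"
  shows "penalized_obj I P J c v - penalized_obj I P J c w \<ge> quad_form I J (\<lambda>a. v a - w a) / 2"
proof -
  have "(\<Sum>a\<in>I. (v a - w a) * residual I J w a) = (\<Sum>a\<in>P. (v a - w a) * residual I J w a)"
    using K fin PI by (intro sum.mono_neutral_right) (auto simp: kkt_def)
  also have "\<dots> \<le> (\<Sum>a\<in>P. c a * (\<bar>v a\<bar> - \<bar>w a\<bar>))"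
    using K c by (intro sum_mono abs_subgradient_ineq) (auto simp: kkt_def)
  finally show ?thesis using penalized_obj_diff[of I J, OF sym, of P c v w] by linarith
qed

lemma nonneg_of_nonneg_near_0:
  fixes A B \<delta> :: real
  assumes "\<delta> > 0" and nonneg: "\<And>t. 0 < t \<Longrightarrow> t < \<delta> \<Longrightarrow> 0 \<le> A * t + B * t\<^sup>2"
  shows "0 \<le> A"
proof -
  have "((\<lambda>t. A + B * t) \<longlongrightarrow> A) (at_right 0)"
    by (intro tendsto_eq_intros) auto
  moreover have "\<forall>\<^sub>F t in at_right 0. 0 \<le> A + B * t"
    using eventually_at_right_real[OF \<open>\<delta> > 0\<close>]
  proof (rule eventually_mono)
    fix t assume "t \<in> {0<..<\<delta>}"
    then have "0 < t" "0 \<le> t * (A + B * t)"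
      using nonneg[of t] by (auto simp: algebra_simps power2_eq_square)
    then show "0 \<le> A + B * t" by (simp add: zero_le_mult_iff)
  qed
  ultimately show ?thesis by (rule tendsto_lowerbound) simp
qed

lemma abs_subgradient_of_min:
  fixes h g c w :: real
  assumes min: "\<And>t. 0 \<le> h * t\<^sup>2 - g * t + c * (\<bar>w + t\<bar> - \<bar>w\<bar>)"
  shows "(w \<noteq> 0 \<longrightarrow> g = sgn w * c) \<and> (w = 0 \<longrightarrow> \<bar>g\<bar> \<le> c)"
proof (intro conjI impI)
  assume "w \<noteq> 0"
  then have "\<bar>w\<bar> > 0" by simp
  have lin: "0 \<le> (sgn w * c - g) * t + h * t\<^sup>2" if "\<bar>t\<bar> < \<bar>w\<bar>" for t
  proof -
    have "\<bar>w + t\<bar> - \<bar>w\<bar> = sgn w * t"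
      using that by (auto simp: sgn_if abs_if)
    then show ?thesis using min[of t] by (simp add: algebra_simps)
  qed
  have "0 \<le> sgn w * c - g"
    by (rule nonneg_of_nonneg_near_0[OF \<open>\<bar>w\<bar> > 0\<close>, of _ h]) (simp add: lin)
  moreover have "0 \<le> - (sgn w * c - g)"
    by (rule nonneg_of_nonneg_near_0[OF \<open>\<bar>w\<bar> > 0\<close>, of _ h])
      (use lin[of "- _"] in \<open>simp add: algebra_simps\<close>)
  ultimately show "g = sgn w * c" by simp
next
  assume "w = 0"
  then have right: "0 \<le> (c - g) * t + h * t\<^sup>2" and left: "0 \<le> (c + g) * t + h * t\<^sup>2"
    if "t > 0" for t
    using min[of t] min[of "- t"] that by (simp_all add: algebra_simps)
  have "0 \<le> c - g" by (rule nonneg_of_nonneg_near_0[OF zero_less_one, of _ h]) (simp add: right)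
  moreover have "0 \<le> c + g" by (rule nonneg_of_nonneg_near_0[OF zero_less_one, of _ h]) (simp add: left)
  ultimately show "\<bar>g\<bar> \<le> c" by simp
qed

lemma quad_form_single:
  assumes "finite I" and "a \<in> I"
  shows "quad_form I J (\<lambda>b. if b = a then t else 0) = t\<^sup>2 * J a a"
proof -
  have "quad_form I J (\<lambda>b. if b = a then t else 0)
      = (\<Sum>b\<in>I. if b = a then (\<Sum>b'\<in>I. if b' = a then t * J a a * t else 0) else 0)"
    unfolding quad_form_def by (auto intro!: sum.cong)
  then show ?thesis using assms by (simp add: power2_eq_square)
qed

lemma penalized_obj_update:
  assumes fin: "finite I" and PI: "P \<subseteq> I" and a: "a \<in> I"
    and sym: "\<And>a b. a \<in> I \<Longrightarrow> b \<in> I \<Longrightarrow> J a b = J b a"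
  shows "penalized_obj I P J c (w(a := w a + t)) - penalized_obj I P J c w =
    J a a / 2 * t\<^sup>2 - residual I J w a * t + (if a \<in> P then c a else 0) * (\<bar>w a + t\<bar> - \<bar>w a\<bar>)"
proof -
  have delta: "(\<lambda>b. (w(a := w a + t)) b - w b) = (\<lambda>b. if b = a then t else 0)"
    by auto
  have "(\<Sum>b\<in>P. c b * (\<bar>(w(a := w a + t)) b\<bar> - \<bar>w b\<bar>))
      = (\<Sum>b\<in>P. if b = a then c a * (\<bar>w a + t\<bar> - \<bar>w a\<bar>) else 0)"
    by (intro sum.cong refl) auto
  also have "\<dots> = (if a \<in> P then c a else 0) * (\<bar>w a + t\<bar> - \<bar>w a\<bar>)"
    using fin PI by (simp add: finite_subset)
  finally have pen: "(\<Sum>b\<in>P. c b * (\<bar>(w(a := w a + t)) b\<bar> - \<bar>w b\<bar>))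
      = (if a \<in> P then c a else 0) * (\<bar>w a + t\<bar> - \<bar>w a\<bar>)" .
  have "(\<Sum>b\<in>I. ((w(a := w a + t)) b - w b) * residual I J w b)
      = (\<Sum>b\<in>I. if b = a then t * residual I J w a else 0)"
    by (intro sum.cong refl) auto
  then have lin: "(\<Sum>b\<in>I. ((w(a := w a + t)) b - w b) * residual I J w b) = t * residual I J w a"
    using fin a by simp
  have "penalized_obj I P J c (w(a := w a + t)) - penalized_obj I P J c w
      = quad_form I J (\<lambda>b. (w(a := w a + t)) b - w b) / 2
        - (\<Sum>b\<in>I. ((w(a := w a + t)) b - w b) * residual I J w b)
        + (\<Sum>b\<in>P. c b * (\<bar>(w(a := w a + t)) b\<bar> - \<bar>w b\<bar>))"
    by (rule penalized_obj_diff) (rule sym)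
  also have "\<dots> = J a a / 2 * t\<^sup>2 - residual I J w a * t
      + (if a \<in> P then c a else 0) * (\<bar>w a + t\<bar> - \<bar>w a\<bar>)"
    unfolding lin pen delta quad_form_single[OF fin a] by (simp add: algebra_simps)
  finally show ?thesis .
qed

lemma coordinatewise_min_imp_kkt:
  assumes fin: "finite I" and PI: "P \<subseteq> I"
    and sym: "\<And>a b. a \<in> I \<Longrightarrow> b \<in> I \<Longrightarrow> J a b = J b a"
    and min: "\<And>a t. a \<in> I \<Longrightarrow> penalized_obj I P J c w \<le> penalized_obj I P J c (w(a := w a + t))"
  shows "kkt I P J c w"
proof -
  have along: "(w a \<noteq> 0 \<longrightarrow> residual I J w a = sgn (w a) * (if a \<in> P then c a else 0)) \<and>
      (w a = 0 \<longrightarrow> \<bar>residual I J w a\<bar> \<le> (if a \<in> P then c a else 0))" if a: "a \<in> I" for a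
  proof (rule abs_subgradient_of_min)
    fix t
    show "0 \<le> J a a / 2 * t\<^sup>2 - residual I J w a * t
        + (if a \<in> P then c a else 0) * (\<bar>w a + t\<bar> - \<bar>w a\<bar>)"
      using min[OF a, of t] penalized_obj_update[where J = J and c = c and w = w and t = t, OF fin PI a sym]
      by linarith
  qed
  show ?thesis
    unfolding kkt_def
  proof (intro conjI ballI)
    fix a assume "a \<in> I - P"
    then show "residual I J w a = 0" using along[of a] by (cases "w a = 0") auto
  next
    fix a assume "a \<in> P"
    with PI along[of a] show "w a \<noteq> 0 \<longrightarrow> residual I J w a = sgn (w a) * c a"
      and "w a = 0 \<longrightarrow> \<bar>residual I J w a\<bar> \<le> c a"
      by auto
  qed
qed

lemma kkt_zero_below_threshold:
  assumes K: "kkt I P J c w" and a: "a \<in> I"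
    and below: "\<bar>residual I J w a\<bar> < (if a \<in> P then c a else 0)"
  shows "w a = 0"
proof (rule ccontr)
  assume "w a \<noteq> 0"
  with K a below have "\<bar>residual I J w a\<bar> = \<bar>c a\<bar>" "a \<in> P"
    by (auto simp: kkt_def abs_mult abs_sgn_eq split: if_splits)
  with below show False by simp
qed

lemma kkt_imp_unique_minimizer:
  assumes fin: "finite I" and PI: "P \<subseteq> I"
    and sym: "\<And>a b. a \<in> I \<Longrightarrow> b \<in> I \<Longrightarrow> J a b = J b a"
    and pd: "pos_def_on I J" and K: "kkt I P J c w" and c: "\<And>a. a \<in> P \<Longrightarrow> c a \<ge> 0"
    and v: "v \<in> vanishing_outside I" and w: "w \<in> vanishing_outside I"
    and le: "penalized_obj I P J c v \<le> penalized_obj I P J c w"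
  shows "v = w"
proof -
  have "quad_form I J (\<lambda>a. v a - w a) \<le> 0"
    using kkt_obj_gap[OF fin PI sym K c, of v] le by simp
  then have "\<forall>a\<in>I. v a - w a = 0"
    using pd unfolding pos_def_on_def by (meson not_le)
  show ?thesis
  proof
    fix a
    show "v a = w a"
      using \<open>\<forall>a\<in>I. v a - w a = 0\<close> v w by (cases "a \<in> I") (auto simp: vanishing_outside_def)
  qed
qed

lemma is_inverse_on_solve:
  assumes inv: "is_inverse_on E A B" and fin: "finite E" and a: "a \<in> E"
    and y: "\<And>b. b \<in> E \<Longrightarrow> y b = (\<Sum>c\<in>E. A b c * w c)"
  shows "w a = (\<Sum>b\<in>E. B a b * y b)"
proof -
  have "(\<Sum>b\<in>E. B a b * y b) = (\<Sum>b\<in>E. \<Sum>c\<in>E. B a b * A b c * w c)"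
    by (simp add: y sum_distrib_left mult.assoc)
  also have "\<dots> = (\<Sum>c\<in>E. (\<Sum>b\<in>E. B a b * A b c) * w c)"
    by (subst sum.swap) (simp add: sum_distrib_right)
  also have "\<dots> = (\<Sum>c\<in>E. if a = c then w c else 0)"
    using inv a unfolding is_inverse_on_def by (intro sum.cong refl) auto
  also have "\<dots> = w a" using fin a by simp
  finally show ?thesis by simp
qed

lemma inverse_on_residual_formula:
  assumes inv: "is_inverse_on E J B" and fin: "finite I" and EI: "E \<subseteq> I"
    and out: "\<And>a. a \<in> I - E \<Longrightarrow> w a = 0" and a: "a \<in> E"
  shows "w a = (\<Sum>b\<in>E. B a b * (J b b - residual I J w b))"
proof (rule is_inverse_on_solve[OF inv finite_subset[OF EI fin] a])
  fix b assume "b \<in> E"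
  have "(\<Sum>c\<in>I. J b c * w c) = (\<Sum>c\<in>E. J b c * w c)"
    using EI out fin by (intro sum.mono_neutral_right) auto
  then show "J b b - residual I J w b = (\<Sum>c\<in>E. J b c * w c)" by (simp add: residual_def)
qed

lemma quad_form_restrict:
  assumes "finite I" and "E \<subseteq> I" and "\<And>a. a \<in> I - E \<Longrightarrow> v a = 0"
  shows "quad_form I J v = quad_form E J v"
proof -
  have "quad_form I J v = (\<Sum>a\<in>I. \<Sum>b\<in>E. v a * J a b * v b)"
    unfolding quad_form_def using assms by (intro sum.cong refl sum.mono_neutral_right) auto
  also have "\<dots> = quad_form E J v"
    unfolding quad_form_def using assms by (intro sum.mono_neutral_right) auto
  finally show ?thesis .
qed

lemma pos_def_on_block_kernel:
  assumes "finite I" and EI: "E \<subseteq> I" and pd: "pos_def_on I J"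
    and ker: "\<And>a. a \<in> E \<Longrightarrow> (\<Sum>b\<in>E. J a b * x b) = 0" and "a \<in> E"
  shows "x a = 0"
proof -
  define v where "v a = (if a \<in> E then x a else 0)" for a
  have "quad_form I J v = quad_form E J x"
    using assms(1) EI by (subst quad_form_restrict[of I E]) (auto simp: v_def quad_form_def)
  also have "\<dots> = (\<Sum>a\<in>E. x a * (\<Sum>b\<in>E. J a b * x b))"
    by (simp add: quad_form_def sum_distrib_left mult.assoc)
  finally have "quad_form I J v = 0" by (simp add: ker)
  with pd EI \<open>a \<in> E\<close> show ?thesis unfolding pos_def_on_def by (metis less_irrefl subsetD v_def)
qed

text \<open>Invertible iff the block \<open>J\<^sub>E\<close> is; this makes the matrix inverses of the library available
  for \<open>J\<^sub>E\<close>.\<close>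
definition pad_block :: "'i set \<Rightarrow> ('i \<Rightarrow> 'i \<Rightarrow> real) \<Rightarrow> real^'i::finite^'i" where
  "pad_block E J = (\<chi> a b. if a \<in> E \<and> b \<in> E then J a b else if a = b then 1 else 0)"

lemma pad_block_row:
  assumes "a \<in> E"
  shows "(\<Sum>b\<in>UNIV. pad_block E J $ a $ b * f b) = (\<Sum>b\<in>E. J a b * f b)"
proof -
  have "(\<Sum>b\<in>UNIV. pad_block E J $ a $ b * f b) = (\<Sum>b\<in>UNIV. if b \<in> E then J a b * f b else 0)"
    using assms by (intro sum.cong) (auto simp: pad_block_def)
  then show ?thesis by (simp add: sum.If_cases)
qed

lemma pad_block_column:
  assumes "c \<in> E"
  shows "(\<Sum>b\<in>UNIV. f b * pad_block E J $ b $ c) = (\<Sum>b\<in>E. f b * J b c)"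
proof -
  have "(\<Sum>b\<in>UNIV. f b * pad_block E J $ b $ c) = (\<Sum>b\<in>UNIV. if b \<in> E then f b * J b c else 0)"
    using assms by (intro sum.cong) (auto simp: pad_block_def)
  then show ?thesis by (simp add: sum.If_cases)
qed

lemma pad_block_outside:
  assumes "a \<notin> E"
  shows "(pad_block E J *v x) $ a = x $ a"
proof -
  have "(pad_block E J *v x) $ a = (\<Sum>b\<in>UNIV. (if a = b then 1 else 0) * x $ b)"
    using assms by (simp add: matrix_vector_mult_def pad_block_def)
  also have "\<dots> = (\<Sum>b\<in>UNIV. if a = b then x $ b else 0)" by (rule sum.cong) auto
  finally show ?thesis by simp
qed

lemma pos_def_on_imp_invertible_on:
  fixes J :: "'i::finite \<Rightarrow> 'i \<Rightarrow> real"
  assumes EI: "E \<subseteq> I" and pd: "pos_def_on I J"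
  shows "invertible_on E J"
proof -
  let ?A = "pad_block E J"
  have "x = 0" if Ax: "?A *v x = 0" for x
  proof -
    have "x $ a = 0" if "a \<notin> E" for a
      using Ax pad_block_outside[OF that, of J x] by simp
    moreover have "x $ a = 0" if "a \<in> E" for a
    proof (rule pos_def_on_block_kernel[OF finite EI pd _ that])
      fix a assume "a \<in> E"
      then show "(\<Sum>b\<in>E. J a b * x $ b) = 0"
        using arg_cong[OF Ax, of "\<lambda>y. y $ a"] by (simp add: matrix_vector_mult_def pad_block_row)
    qed
    ultimately show ?thesis by (metis vec_eq_iff zero_index)
  qed
  then obtain B where BA: "B ** ?A = mat 1"
    using matrix_left_invertible_ker[of ?A] by blast
  then have AB: "?A ** B = mat 1" by (rule matrix_left_right_inverse[THEN iffD2])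
  have "is_inverse_on E J (\<lambda>a b. B $ a $ b)"
    unfolding is_inverse_on_def
  proof (intro conjI ballI)
    fix a c assume "a \<in> E" "c \<in> E"
    show "(\<Sum>b\<in>E. J a b * B $ b $ c) = (if a = c then 1 else 0)"
      using arg_cong[OF AB, of "\<lambda>M. M $ a $ c"] pad_block_row[OF \<open>a \<in> E\<close>]
      by (simp add: matrix_matrix_mult_def mat_def)
    show "(\<Sum>b\<in>E. B $ a $ b * J b c) = (if a = c then 1 else 0)"
      using arg_cong[OF BA, of "\<lambda>M. M $ a $ c"] pad_block_column[OF \<open>c \<in> E\<close>]
      by (simp add: matrix_matrix_mult_def mat_def)
  qed
  then show ?thesis unfolding invertible_on_def by blast
qed

lemma closed_vanishing_outside: "closed {x::real^'i::finite. vec_nth x \<in> vanishing_outside I}"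
proof -
  have "{x::real^'i. vec_nth x \<in> vanishing_outside I} = (\<Inter>a\<in>-I. {x. x $ a = 0})"
    by (auto simp: vanishing_outside_def)
  then show ?thesis
    by (simp add: closed_INT closed_Collect_eq continuous_on_component)
qed

lemma pos_def_on_sphere_bound:
  fixes J :: "'i::finite \<Rightarrow> 'i \<Rightarrow> real"
  assumes pd: "pos_def_on I J"
  obtains \<mu> where "\<mu> > 0" and "\<And>x::real^'i. vec_nth x \<in> vanishing_outside I \<Longrightarrow> norm x = 1 \<Longrightarrow>
    \<mu> \<le> quad_form I J (vec_nth x)"
proof -
  let ?K = "{x::real^'i. vec_nth x \<in> vanishing_outside I} \<inter> sphere 0 1"
  show ?thesis
  proof (cases "?K = {}")
    case False
    have "continuous_on ?K (\<lambda>x. quad_form I J (vec_nth x))"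
      unfolding quad_form_def by (intro continuous_intros)
    then obtain x0 where x0: "x0 \<in> ?K" and min: "\<And>y. y \<in> ?K \<Longrightarrow>
        quad_form I J (vec_nth x0) \<le> quad_form I J (vec_nth y)"
      using continuous_attains_inf[OF compact_Int_closed[OF compact_sphere closed_vanishing_outside]]
        False by (metis Int_commute)
    from x0 have "x0 \<noteq> 0" by auto
    then obtain a where "x0 $ a \<noteq> 0" by (auto simp: vec_eq_iff)
    with x0 have "a \<in> I" by (auto simp: vanishing_outside_def)
    with \<open>x0 $ a \<noteq> 0\<close> pd have "quad_form I J (vec_nth x0) > 0" unfolding pos_def_on_def by blast
    with min show ?thesis by (intro that) auto
  next
    case True
    show ?thesis by (rule that[of 1]) (use True in auto)
  qed
qed

lemma quad_form_coercive:
  fixes J :: "'i::finite \<Rightarrow> 'i \<Rightarrow> real"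
  assumes pd: "pos_def_on I J"
  obtains \<mu> where "\<mu> > 0"
    and "\<And>x::real^'i. vec_nth x \<in> vanishing_outside I \<Longrightarrow> \<mu> * (norm x)\<^sup>2 \<le> quad_form I J (vec_nth x)"
proof -
  obtain \<mu> where "\<mu> > 0" and sphere: "\<And>x::real^'i. vec_nth x \<in> vanishing_outside I \<Longrightarrow> norm x = 1 \<Longrightarrow>
      \<mu> \<le> quad_form I J (vec_nth x)"
    using pos_def_on_sphere_bound[OF pd] by blast
  have "\<mu> * (norm x)\<^sup>2 \<le> quad_form I J (vec_nth x)" if "vec_nth x \<in> vanishing_outside I" for x :: "real^'i"
  proof (cases "x = 0")
    case False
    have "quad_form I J (vec_nth x) = (norm x)\<^sup>2 * quad_form I J (vec_nth ((1 / norm x) *\<^sub>R x))"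
      using False by (simp add: quad_form_def sum_distrib_left power2_eq_square field_simps)
    moreover have "\<mu> \<le> quad_form I J (vec_nth ((1 / norm x) *\<^sub>R x))"
      using False that by (intro sphere) (auto simp: vanishing_outside_def)
    ultimately show ?thesis by (metis mult.commute mult_right_mono zero_le_power2)
  qed (simp add: quad_form_def)
  with \<open>\<mu> > 0\<close> show ?thesis by (rule that)
qed

lemma penalized_obj_lower_bound:
  fixes x :: "real^'i::finite"
  assumes quad: "\<mu> * (norm x)\<^sup>2 \<le> quad_form I J (vec_nth x)" and c: "\<And>a. a \<in> P \<Longrightarrow> c a \<ge> 0"
  shows "\<mu> / 2 * (norm x)\<^sup>2 - (\<Sum>a\<in>I. \<bar>J a a\<bar>) * norm x \<le> penalized_obj I P J c (vec_nth x)"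
proof -
  have "(\<Sum>a\<in>I. x $ a * J a a) \<le> (\<Sum>a\<in>I. norm x * \<bar>J a a\<bar>)"
  proof (rule sum_mono)
    fix a
    have "x $ a * J a a \<le> \<bar>x $ a\<bar> * \<bar>J a a\<bar>" by (metis abs_ge_self abs_mult)
    also have "\<dots> \<le> norm x * \<bar>J a a\<bar>" by (intro mult_right_mono component_le_norm_cart) auto
    finally show "x $ a * J a a \<le> norm x * \<bar>J a a\<bar>" .
  qed
  moreover have "(\<Sum>a\<in>P. c a * \<bar>x $ a\<bar>) \<ge> 0" by (intro sum_nonneg) (simp add: c)
  ultimately show ?thesis
    using quad by (simp add: penalized_obj_def sum_distrib_left mult.commute)
qed

lemma penalized_obj_has_minimizer:
  fixes J :: "'i::finite \<Rightarrow> 'i \<Rightarrow> real"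
  assumes pd: "pos_def_on I J" and c: "\<And>a. a \<in> P \<Longrightarrow> c a \<ge> 0"
  obtains w where "w \<in> vanishing_outside I"
    and "\<And>v. v \<in> vanishing_outside I \<Longrightarrow> penalized_obj I P J c w \<le> penalized_obj I P J c v"
proof -
  obtain \<mu> where "\<mu> > 0" and coercive:
    "\<And>x::real^'i. vec_nth x \<in> vanishing_outside I \<Longrightarrow> \<mu> * (norm x)\<^sup>2 \<le> quad_form I J (vec_nth x)"
    using quad_form_coercive[OF pd] by blast
  define Z where "Z = {x::real^'i. vec_nth x \<in> vanishing_outside I}"
  define \<Phi> where "\<Phi> x = penalized_obj I P J c (vec_nth x)" for x :: "real^'i"
  define L where "L = (\<Sum>a\<in>I. \<bar>J a a\<bar>)"
  define R where "R = 2 * L / \<mu> + 1"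
  have "L \<ge> 0" unfolding L_def by (intro sum_nonneg) auto
  then have "R \<ge> 1" using \<open>\<mu> > 0\<close> by (simp add: R_def)
  have "0 \<in> Z \<inter> cball 0 R" using \<open>R \<ge> 1\<close> by (simp add: Z_def vanishing_outside_def)
  moreover have "continuous_on (Z \<inter> cball 0 R) \<Phi>"
    unfolding \<Phi>_def penalized_obj_def quad_form_def by (intro continuous_intros) auto
  ultimately obtain xs where xs: "xs \<in> Z \<inter> cball 0 R"
    and xs_min: "\<And>y. y \<in> Z \<inter> cball 0 R \<Longrightarrow> \<Phi> xs \<le> \<Phi> y"
    using continuous_attains_inf[OF compact_Int_closed[OF compact_cball closed_vanishing_outside]]
    unfolding Z_def by (metis Int_commute empty_iff)
  \<comment> \<open>outside the ball \<open>\<Phi>\<close> is positive, hence larger than \<open>\<Phi> 0 = 0\<close>\<close>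
  have global: "\<Phi> xs \<le> \<Phi> x" if "x \<in> Z" for x
  proof (cases "norm x \<le> R")
    case False
    then have "L < \<mu> / 2 * norm x" using \<open>\<mu> > 0\<close> by (simp add: R_def field_simps)
    moreover have "norm x > 0" using False \<open>R \<ge> 1\<close> by linarith
    ultimately have "0 < norm x * (\<mu> / 2 * norm x - L)" by simp
    also have "\<dots> = \<mu> / 2 * (norm x)\<^sup>2 - L * norm x" by (simp add: algebra_simps power2_eq_square)
    also have "\<dots> \<le> \<Phi> x"
      using penalized_obj_lower_bound[where x = x and P = P and c = c] coercive[of x] c that
      by (simp add: \<Phi>_def Z_def L_def)
    moreover have "\<Phi> xs \<le> \<Phi> 0"
      using xs_min \<open>R \<ge> 1\<close> by (simp add: Z_def vanishing_outside_def)
    ultimately show ?thesis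
      by (simp add: \<Phi>_def penalized_obj_def quad_form_def)
  qed (use that xs_min in auto)
  show ?thesis
  proof (rule that)
    show "vec_nth xs \<in> vanishing_outside I" using xs by (simp add: Z_def)
    fix v assume "v \<in> vanishing_outside I"
    moreover have v: "vec_nth (vec_lambda v) = v" by auto
    ultimately have "vec_lambda v \<in> Z" by (simp add: Z_def)
    from global[OF this] v show "penalized_obj I P J c (vec_nth xs) \<le> penalized_obj I P J c v"
      by (simp add: \<Phi>_def)
  qed
qed

lemma kkt_active_set_closed_form:
  fixes J :: "'i::finite \<Rightarrow> 'i \<Rightarrow> real"
  assumes pd: "pos_def_on I J" and K: "kkt I P J c w"
    and E: "E = {a \<in> I. (if a \<in> P then c a else 0) \<le> \<bar>residual I J w a\<bar>}"
  shows "invertible_on E J"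
    and "\<And>a. a \<in> E \<Longrightarrow> w a = (\<Sum>b\<in>E. mat_inv_on E J a b * (J b b - residual I J w b))"
    and "\<And>a. a \<in> I - E \<Longrightarrow> w a = 0"
proof -
  have EI: "E \<subseteq> I" using E by auto
  show out: "w a = 0" if "a \<in> I - E" for a
    using that E by (intro kkt_zero_below_threshold[OF K]) (auto simp: not_le)
  show inv: "invertible_on E J"
    using EI pd by (rule pos_def_on_imp_invertible_on)
  then have "is_inverse_on E J (mat_inv_on E J)"
    unfolding invertible_on_def mat_inv_on_def by (rule someI_ex)
  then show "w a = (\<Sum>b\<in>E. mat_inv_on E J a b * (J b b - residual I J w b))" if "a \<in> E" for a
    using that EI out by (intro inverse_on_residual_formula) auto
qed

section \<open>The empirical criterion\<close>

abbreviation offdiag_idx :: "('p::linorder \<times> 'p) set" where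
  "offdiag_idx \<equiv> {(j, k). j < k}"

text \<open>Where \<open>S\<^sub>j\<^sub>k = 0\<close> the weight is \<open>0\<close> (division by zero), as are the corresponding terms of
  \<^const>\<open>dhat\<close>, \<^const>\<open>is_subgrad\<close> and \<^const>\<open>Ehat\<close>.\<close>
definition penalty_weight :: "real \<Rightarrow> nat \<Rightarrow> (nat \<Rightarrow> real^'p::{finite,linorder}) \<Rightarrow> 'p \<times> 'p \<Rightarrow> real" where
  "penalty_weight lam n X a = lam / real n / (Smat n X a)\<^sup>2"

lemma offdiag_idx_subset_idx: "offdiag_idx \<subseteq> idx"
  by (auto simp: idx_def)

lemma Jhat_sym: "Jhat n X a b = Jhat n X b a"
  unfolding Jhat_def by (auto simp: mult.commute)

lemma vecs_eq_vanishing_outside: "vecs = vanishing_outside idx"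
  by (simp add: vecs_def vanishing_outside_def)

lemma dhat_eq_penalized_obj:
  "dhat lam n X w = penalized_obj idx offdiag_idx (Jhat n X) (penalty_weight lam n X) w"
  unfolding dhat_def penalized_obj_def quad_form_def penalty_weight_def
  by (simp add: sum_distrib_left field_simps)

lemma Ehat_iff:
  "a \<in> Ehat lam n X w \<longleftrightarrow> a \<in> idx \<and>
     (if a \<in> offdiag_idx then penalty_weight lam n X a else 0) \<le> \<bar>residual idx (Jhat n X) w a\<bar>"
  by (cases a) (auto simp: Ehat_def residual_def penalty_weight_def idx_def)

lemma abs_le_weight_imp_subgrad_scale:
  fixes r lam m s :: real
  assumes r: "\<bar>r\<bar> \<le> lam / m / s\<^sup>2" and "lam \<ge> 0" and "m > 0"
  shows "\<exists>t. -1 \<le> t \<and> t \<le> 1 \<and> m * r / lam = t / s\<^sup>2"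
proof (cases "lam = 0 \<or> s = 0")
  case True
  with r have "m * r / lam = 0" by auto
  then show ?thesis by (intro exI[of _ 0]) simp
next
  case False
  with assms have "lam > 0" "s\<^sup>2 > 0" by auto
  with r \<open>m > 0\<close> have "\<bar>m * r * s\<^sup>2\<bar> \<le> lam" by (simp add: field_simps abs_mult)
  with \<open>lam > 0\<close> \<open>s\<^sup>2 > 0\<close> show ?thesis
    by (intro exI[of _ "m * r * s\<^sup>2 / lam"]) (auto simp: abs_le_iff le_divide_eq divide_le_eq)
qed

lemma kkt_imp_subgrad:
  fixes X :: "nat \<Rightarrow> real^'p::{finite,linorder}"
  assumes K: "kkt idx offdiag_idx (Jhat n X) (penalty_weight lam n X) w"
    and lam: "lam \<ge> 0" and n: "n > 0"
  shows "\<exists>\<eta>. is_subgrad n X w \<eta> \<and>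
           (\<forall>a\<in>idx. residual idx (Jhat n X) w a = lam / real n * \<eta> a)"
proof -
  let ?r = "residual idx (Jhat n X) w" and ?S = "Smat n X"
  define \<eta> where "\<eta> a = (if fst a = snd a then 0 else if w a = 0 then real n * ?r a / lam
      else sgn (w a) / (?S a)\<^sup>2)" for a
  have diag: "?r a = 0" if "a \<in> idx" "fst a = snd a" for a
    using K that by (cases a) (auto simp: kkt_def)
  have off: "(w a \<noteq> 0 \<longrightarrow> ?r a = sgn (w a) * (lam / real n / (?S a)\<^sup>2)) \<and>
      (w a = 0 \<longrightarrow> \<bar>?r a\<bar> \<le> lam / real n / (?S a)\<^sup>2)" if "a \<in> offdiag_idx" for a
    using K that by (auto simp: kkt_def penalty_weight_def)
  have zero: "\<exists>t. -1 \<le> t \<and> t \<le> 1 \<and> \<eta> a = t / (?S a)\<^sup>2"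
    if "a \<in> offdiag_idx" "w a = 0" for a
    using off[OF that(1)] that lam n by (auto simp: \<eta>_def intro: abs_le_weight_imp_subgrad_scale)
  have "is_subgrad n X w \<eta>"
    unfolding is_subgrad_def
  proof (intro allI impI)
    fix j k :: 'p assume "j \<le> k"
    then show "if j = k then \<eta> (j, k) = 0
         else if w (j, k) > 0 then \<eta> (j, k) = 1 / (?S (j, k))\<^sup>2
         else if w (j, k) < 0 then \<eta> (j, k) = - 1 / (?S (j, k))\<^sup>2
         else (\<exists>t. -1 \<le> t \<and> t \<le> 1 \<and> \<eta> (j, k) = t / (?S (j, k))\<^sup>2)"
      using zero[of "(j, k)"] by (auto simp: \<eta>_def)
  qed
  moreover have "?r a = lam / real n * \<eta> a" if "a \<in> idx" for a
  proof (cases "fst a = snd a")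
    case False
    with that have "a \<in> offdiag_idx" by (cases a) (auto simp: idx_def)
    then show ?thesis
      using off[of a] False lam n by (cases "lam = 0") (auto simp: \<eta>_def mult_ac)
  qed (simp add: diag that \<eta>_def)
  ultimately show ?thesis by blast
qed

lemma unique_minimizer_closed_form:
  fixes X :: "nat \<Rightarrow> real^'p::{finite,linorder}"
  assumes pd: "pos_def_on idx (Jhat n X)" and lam: "lam \<ge> 0" and n: "n > 0"
  shows "\<exists>w. is_minimizer lam n X w \<and>
           (\<forall>v. is_minimizer lam n X v \<longrightarrow> v = w) \<and>
           (\<exists>\<eta>. is_subgrad n X w \<eta> \<and>
              (let E = Ehat lam n X w; J = Jhat n X in
                invertible_on E J \<and>
                (\<forall>a\<in>E. w a = (\<Sum>b\<in>E. mat_inv_on E J a b * (J b b - (lam / real n) * \<eta> b))) \<and>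
                (\<forall>a\<in>idx - E. w a = 0)))"
proof -
  let ?J = "Jhat n X" and ?c = "penalty_weight lam n X"
  let ?F = "penalized_obj idx offdiag_idx ?J ?c"
  have fin: "finite (idx :: ('p \<times> 'p) set)" by simp
  note sym = Jhat_sym[of n X]
  have c: "?c a \<ge> 0" for a using lam by (simp add: penalty_weight_def)
  have minimizer_iff: "is_minimizer lam n X v \<longleftrightarrow>
      v \<in> vanishing_outside idx \<and> (\<forall>u\<in>vanishing_outside idx. ?F v \<le> ?F u)" for v
    by (simp add: is_minimizer_def dhat_eq_penalized_obj vecs_eq_vanishing_outside)
  obtain w where w: "w \<in> vanishing_outside idx"
    and w_min: "\<And>v. v \<in> vanishing_outside idx \<Longrightarrow> ?F w \<le> ?F v"
    using penalized_obj_has_minimizer[OF pd, where P = offdiag_idx and c = ?c] c by auto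
  have K: "kkt idx offdiag_idx ?J ?c w"
    using fin offdiag_idx_subset_idx sym
  proof (rule coordinatewise_min_imp_kkt)
    fix a :: "'p \<times> 'p" and t :: real
    assume "a \<in> idx"
    with w have "w(a := w a + t) \<in> vanishing_outside idx" by (simp add: vanishing_outside_def)
    then show "?F w \<le> ?F (w(a := w a + t))" by (rule w_min)
  qed
  have unique: "v = w" if "is_minimizer lam n X v" for v
    using that w minimizer_iff
    by (intro kkt_imp_unique_minimizer[OF fin offdiag_idx_subset_idx _ pd K]) (auto simp: sym c)
  obtain \<eta> where subgrad: "is_subgrad n X w \<eta>"
    and res: "\<And>a. a \<in> idx \<Longrightarrow> residual idx ?J w a = lam / real n * \<eta> a"
    using kkt_imp_subgrad[OF K lam n] by blast
  have E: "Ehat lam n X w =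
      {a \<in> idx. (if a \<in> offdiag_idx then ?c a else 0) \<le> \<bar>residual idx ?J w a\<bar>}"
    by (auto simp: Ehat_iff)
  note closed_form = kkt_active_set_closed_form[OF pd K E]
  have "w a = (\<Sum>b\<in>Ehat lam n X w. mat_inv_on (Ehat lam n X w) ?J a b * (?J b b - lam / real n * \<eta> b))"
    if "a \<in> Ehat lam n X w" for a
    unfolding closed_form(2)[OF that] using that res by (intro sum.cong refl) (auto simp: Ehat_iff)
  then show ?thesis
    using w w_min unique subgrad closed_form(1,3) minimizer_iff unfolding Let_def by blast
qed

section \<open>Scores and positive definiteness of the score covariance\<close>

definition det2 :: "('p \<times> 'p \<Rightarrow> real) \<Rightarrow> 'p \<Rightarrow> 'p \<Rightarrow> real" where
  "det2 \<theta> j k = \<theta> (j, j) * \<theta> (k, k) - (\<theta> (j, k))\<^sup>2"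

definition score_numer :: "('p \<times> 'p \<Rightarrow> real) \<Rightarrow> real^'p \<Rightarrow> 'p \<Rightarrow> 'p \<Rightarrow> real" where
  "score_numer \<theta> x j k = \<theta> (j, k) * det2 \<theta> j k + x$j * x$k * det2 \<theta> j k
     - \<theta> (j, k) * (\<theta> (k, k) * (x$j)\<^sup>2 + \<theta> (j, j) * (x$k)\<^sup>2 - 2 * \<theta> (j, k) * x$j * x$k)"

lemma Umat_eq_0:
  assumes "c \<in> idx" and "c \<notin> {(fst a, fst a), (snd a, snd a), a}"
  shows "Umat \<theta> x c a = 0"
proof -
  have "(\<lambda>t. ell (fst a) (snd a) (\<theta>(c := t)) x) = (\<lambda>t. ell (fst a) (snd a) \<theta> x)"
    using assms(2) by (cases a) (auto simp: ell_def)
  then show ?thesis by (simp add: Umat_def score_def assms(1))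
qed

lemma Umat_diag:
  assumes "\<theta> (j, j) > 0"
  shows "Umat \<theta> x (j, j) (j, j) = ((x$j)\<^sup>2 - \<theta> (j, j)) / (\<theta> (j, j))\<^sup>2"
proof -
  have "((\<lambda>t. - ln t - (x$j)\<^sup>2 / t) has_real_derivative ((x$j)\<^sup>2 - \<theta> (j, j)) / (\<theta> (j, j))\<^sup>2)
      (at (\<theta> (j, j)))"
    using assms by (auto intro!: derivative_eq_intros simp: field_simps power2_eq_square)
  moreover have "(\<lambda>t. ell j j (\<theta>((j, j) := t)) x) = (\<lambda>t. - ln t - (x$j)\<^sup>2 / t)"
    by (simp add: ell_def)
  ultimately show ?thesis
    by (simp add: Umat_def score_def idx_def DERIV_imp_deriv)
qed

lemma Umat_offdiag:
  assumes "j < k" and pos: "det2 \<theta> j k > 0"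
  shows "Umat \<theta> x (j, k) (j, k) = 2 * score_numer \<theta> x j k / (det2 \<theta> j k)\<^sup>2"
proof -
  define s where "s = \<theta> (j, k)"
  define u where "u = det2 \<theta> j k"
  define B where "B = \<theta> (k, k) * (x$j)\<^sup>2 + \<theta> (j, j) * (x$k)\<^sup>2"
  have "((\<lambda>t. - ln (u + s\<^sup>2 - t\<^sup>2) - (B - 2 * t * x$j * x$k) / (u + s\<^sup>2 - t\<^sup>2)) has_real_derivative
      2 * s / u + (2 * x$j * x$k * u - 2 * s * (B - 2 * s * x$j * x$k)) / u\<^sup>2) (at s)"
    using pos unfolding u_def
    by (auto intro!: derivative_eq_intros simp: field_simps power2_eq_square)
  also have "2 * s / u + (2 * x$j * x$k * u - 2 * s * (B - 2 * s * x$j * x$k)) / u\<^sup>2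
      = 2 * score_numer \<theta> x j k / (det2 \<theta> j k)\<^sup>2"
    using pos by (simp add: u_def s_def B_def score_numer_def field_simps power2_eq_square)
  moreover have "(\<lambda>t. ell j k (\<theta>((j, k) := t)) x)
      = (\<lambda>t. - ln (u + s\<^sup>2 - t\<^sup>2) - (B - 2 * t * x$j * x$k) / (u + s\<^sup>2 - t\<^sup>2))"
    using \<open>j < k\<close> by (auto simp: ell_def u_def s_def B_def det2_def algebra_simps)
  ultimately show ?thesis
    using \<open>j < k\<close> by (simp add: Umat_def score_def idx_def DERIV_imp_deriv s_def)
qed

text \<open>Conditions under which every diagonal entry of the score matrix \<open>U(S; z)\<close> is nonzero.\<close>
definition generic ::
    "('p::{finite,linorder} \<times> 'p::{finite,linorder} \<Rightarrow> real) \<Rightarrow> real^'p::{finite,linorder} \<Rightarrow> bool" where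
  "generic S z \<longleftrightarrow> (\<forall>j. S (j, j) > 0 \<and> (z$j)\<^sup>2 \<noteq> S (j, j)) \<and>
     (\<forall>j k. j < k \<longrightarrow> det2 S j k \<noteq> 0 \<and> score_numer S z j k \<noteq> 0)"

lemma det2_Smat_nonneg:
  fixes X :: "nat \<Rightarrow> real^'p::{finite,linorder}"
  assumes "j < k"
  shows "det2 (Smat n X) j k \<ge> 0"
proof -
  have "(\<Sum>i<n. X i $ j * X i $ k)\<^sup>2 \<le> (\<Sum>i<n. (X i $ j)\<^sup>2) * (\<Sum>i<n. (X i $ k)\<^sup>2)"
    by (rule Cauchy_Schwarz_ineq_sum)
  then have "(\<Sum>i<n. X i $ j * X i $ k)\<^sup>2 / (real n)\<^sup>2
      \<le> (\<Sum>i<n. (X i $ j)\<^sup>2) * (\<Sum>i<n. (X i $ k)\<^sup>2) / (real n)\<^sup>2"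
    by (rule divide_right_mono) simp
  with assms show ?thesis
    by (simp add: det2_def Smat_def idx_def power_divide power2_eq_square)
qed

lemma generic_imp_Umat_diag_nonzero:
  fixes X :: "nat \<Rightarrow> real^'p::{finite,linorder}"
  assumes "generic (Smat n X) (X 0)" and "a \<in> idx"
  shows "Umat (Smat n X) (X 0) a a \<noteq> 0"
proof -
  obtain j k where a: "a = (j, k)" and "j \<le> k" using \<open>a \<in> idx\<close> by (auto simp: idx_def)
  show ?thesis
  proof (cases "j = k")
    case True
    have "Smat n X (j, j) > 0" "(X 0 $ j)\<^sup>2 \<noteq> Smat n X (j, j)"
      using assms(1) by (auto simp: generic_def)
    then show ?thesis by (simp add: a True Umat_diag)
  next
    case False
    with \<open>j \<le> k\<close> have "j < k" by simp
    with assms(1) have "det2 (Smat n X) j k \<noteq> 0" "score_numer (Smat n X) (X 0) j k \<noteq> 0"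
      by (auto simp: generic_def)
    moreover have "det2 (Smat n X) j k > 0"
      using det2_Smat_nonneg[OF \<open>j < k\<close>, of n X] \<open>det2 (Smat n X) j k \<noteq> 0\<close> by linarith
    ultimately show ?thesis using \<open>j < k\<close> by (simp add: a Umat_offdiag)
  qed
qed

text \<open>The score matrix is triangular up to ordering: the row of \<open>\<theta>\<^sub>j\<^sub>k\<close>, \<open>j < k\<close>, has a single
  nonzero entry, and the row of \<open>\<theta>\<^sub>j\<^sub>j\<close> is otherwise supported on off-diagonal columns.\<close>
lemma Umat_row_sum:
  assumes c: "c \<in> idx"
    and v: "\<And>a. a \<in> idx \<Longrightarrow> a \<noteq> c \<Longrightarrow> c \<in> {(fst a, fst a), (snd a, snd a)} \<Longrightarrow> v a = 0"
  shows "(\<Sum>a\<in>idx. Umat \<theta> x c a * v a) = Umat \<theta> x c c * v c"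
proof -
  have "Umat \<theta> x c a * v a = (if a = c then Umat \<theta> x c c * v c else 0)" if "a \<in> idx" for a
  proof (cases "a = c \<or> c \<in> {(fst a, fst a), (snd a, snd a)}")
    case False
    then show ?thesis using c Umat_eq_0[of c a] by auto
  qed (use that v[of a] in auto)
  then have "(\<Sum>a\<in>idx. Umat \<theta> x c a * v a) = (\<Sum>a\<in>idx. if a = c then Umat \<theta> x c c * v c else 0)"
    by (rule sum.cong[OF refl])
  then show ?thesis using c by simp
qed

lemma Umat_kernel_trivial:
  fixes X :: "nat \<Rightarrow> real^'p::{finite,linorder}"
  assumes g: "generic (Smat n X) (X 0)"
    and ker: "\<And>c. c \<in> idx \<Longrightarrow> (\<Sum>a\<in>idx. Umat (Smat n X) (X 0) c a * v a) = 0"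
    and a: "a \<in> idx"
  shows "v a = 0"
proof -
  have single: "v c = 0" if "c \<in> idx" "\<And>a. a \<in> idx \<Longrightarrow> a \<noteq> c \<Longrightarrow>
      c \<in> {(fst a, fst a), (snd a, snd a)} \<Longrightarrow> v a = 0" for c
    using ker[of c] Umat_row_sum[of c v] generic_imp_Umat_diag_nonzero[OF g] that by simp
  have off: "v b = 0" if "b \<in> idx" "fst b \<noteq> snd b" for b
    using that(1) by (rule single) (use that(2) in auto)
  show ?thesis
  proof (cases "fst a = snd a")
    case True
    show ?thesis
    proof (rule single[OF a])
      fix b assume "b \<in> idx" "b \<noteq> a" "a \<in> {(fst b, fst b), (snd b, snd b)}"
      with True have "fst b \<noteq> snd b" by (cases a, cases b) auto
      with \<open>b \<in> idx\<close> show "v b = 0" by (rule off)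
    qed
  qed (use a off in auto)
qed

lemma quad_form_Jhat:
  "quad_form idx (Jhat n X) v
     = (\<Sum>i<n. \<Sum>c\<in>idx. (\<Sum>a\<in>idx. Umat (Smat n X) (X i) c a * v a)\<^sup>2) / real n"
proof -
  have "quad_form idx (Jhat n X) v = quad_form idx (\<lambda>a b. 1 / real n * (\<Sum>i<n. \<Sum>c\<in>idx.
      Umat (Smat n X) (X i) c a * Umat (Smat n X) (X i) c b)) v"
    unfolding quad_form_def Jhat_def by simp
  also have "\<dots> = 1 / real n * (\<Sum>i<n. \<Sum>c\<in>idx. quad_form idx
      (\<lambda>a b. Umat (Smat n X) (X i) c a * Umat (Smat n X) (X i) c b) v)"
    by (simp only: quad_form_scale quad_form_sum)
  finally show ?thesis by (simp add: quad_form_rank_one)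
qed

lemma generic_imp_pos_def:
  fixes X :: "nat \<Rightarrow> real^'p::{finite,linorder}"
  assumes n: "n > 0" and g: "generic (Smat n X) (X 0)"
  shows "pos_def_on idx (Jhat n X)"
  unfolding pos_def_on_def
proof (intro allI impI)
  fix v :: "'p \<times> 'p \<Rightarrow> real"
  assume "\<exists>a\<in>idx. v a \<noteq> 0"
  then obtain c where c: "c \<in> idx" "(\<Sum>a\<in>idx. Umat (Smat n X) (X 0) c a * v a) \<noteq> 0"
    using Umat_kernel_trivial[OF g] by blast
  let ?sq = "\<lambda>i. \<Sum>c\<in>idx. (\<Sum>a\<in>idx. Umat (Smat n X) (X i) c a * v a)\<^sup>2"
  have "0 < (\<Sum>a\<in>idx. Umat (Smat n X) (X 0) c a * v a)\<^sup>2" using c by simp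
  also have "\<dots> \<le> ?sq 0" using c by (intro member_le_sum) auto
  also have "\<dots> \<le> (\<Sum>i<n. ?sq i)" using n by (intro member_le_sum) (auto intro: sum_nonneg)
  finally show "quad_form idx (Jhat n X) v > 0" using n by (simp add: quad_form_Jhat)
qed

section \<open>Null sets cut out by polynomials\<close>

lemma measure_le_if_translates_overlap_boundedly:
  fixes T C :: "'a::euclidean_space set"
  assumes T: "T \<in> lmeasurable" and C: "C \<in> lmeasurable"
    and inC: "\<And>i. i < K \<Longrightarrow> (+) (d i) ` T \<subseteq> C"
    and overlap: "\<And>z. card {i. i < K \<and> z \<in> (+) (d i) ` T} \<le> N"
  shows "real K * measure lebesgue T \<le> real N * measure lebesgue C"
proof -
  have "((\<lambda>z. \<Sum>i<K. indicat_real ((+) (d i) ` T) z) has_integral (\<Sum>i<K. measure lebesgue T)) UNIV"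
    using T by (intro has_integral_sum finite_lessThan)
      (metis lmeasurable_iff_has_integral measurable_translation measure_translation)
  moreover have "((\<lambda>z. real N * indicat_real C z) has_integral (real N * measure lebesgue C)) UNIV"
    using C by (intro has_integral_mult_right) (simp add: lmeasurable_iff_has_integral)
  moreover have "(\<Sum>i<K. indicat_real ((+) (d i) ` T) z) \<le> real N * indicat_real C z" for z
  proof -
    have "(\<Sum>i<K. indicat_real ((+) (d i) ` T) z) = real (card {i. i < K \<and> z \<in> (+) (d i) ` T})"
      by (simp add: indicator_def sum.If_cases lessThan_def Collect_conj_eq)
    also have "\<dots> \<le> real N * indicat_real C z"
    proof (cases "z \<in> C")
      case False
      with inC have "card {i. i < K \<and> z \<in> (+) (d i) ` T} = 0" by (auto simp: card_eq_0_iff)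
      with False show ?thesis by simp
    qed (use overlap in simp)
    finally show ?thesis .
  qed
  ultimately show ?thesis by (simp add: has_integral_le)
qed

text \<open>The \<open>K\<close> translates of \<open>S \<inter> cbox a b\<close> by \<open>(i/K) e\<close>, \<open>i < K\<close>, lie in \<open>cbox a (b + e)\<close> and
  overlap at most \<open>N\<close>-fold, since a line parallel to \<open>e\<close> meets \<open>S\<close> in at most \<open>N\<close> points.\<close>
lemma measure_le_if_line_sections_bounded:
  fixes S :: "(real^'n) set" and e :: "real^'n" and K :: nat
  assumes T: "S \<inter> cbox a b \<in> lmeasurable" and e: "\<And>i. e$i \<ge> 0"
    and fin: "\<And>z. finite {t. z + t *\<^sub>R e \<in> S}" and card: "\<And>z. card {t. z + t *\<^sub>R e \<in> S} \<le> N"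
    and "K > 0"
  shows "real K * measure lebesgue (S \<inter> cbox a b) \<le> real N * measure lebesgue (cbox a (b + e))"
proof (rule measure_le_if_translates_overlap_boundedly[OF T lmeasurable_cbox])
  fix i assume "i < K"
  then have "0 \<le> real i / real K" "real i / real K \<le> 1" by auto
  then have scaled: "0 \<le> (real i / real K) * e$q" "(real i / real K) * e$q \<le> e$q" for q
    using e[of q] mult_left_le_one_le[of "e$q" "real i / real K"] by auto
  show "(+) ((real i / real K) *\<^sub>R e) ` (S \<inter> cbox a b) \<subseteq> cbox a (b + e)"
  proof (rule image_subsetI)
    fix y assume "y \<in> S \<inter> cbox a b"
    then have y: "a$q \<le> y$q \<and> y$q \<le> b$q" for q by (auto simp: mem_box_cart)
    show "(real i / real K) *\<^sub>R e + y \<in> cbox a (b + e)"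
      unfolding mem_box_cart
    proof
      fix q
      show "a$q \<le> ((real i / real K) *\<^sub>R e + y)$q \<and> ((real i / real K) *\<^sub>R e + y)$q \<le> (b + e)$q"
        using scaled[of q] y[of q] by (simp del: times_divide_eq_left)
    qed
  qed
next
  fix z
  let ?I = "{i. i < K \<and> z \<in> (+) ((real i / real K) *\<^sub>R e) ` (S \<inter> cbox a b)}"
  have "inj_on (\<lambda>i. - (real i / real K)) ?I" using \<open>K > 0\<close> by (auto simp: inj_on_def)
  moreover have "(\<lambda>i. - (real i / real K)) ` ?I \<subseteq> {t. z + t *\<^sub>R e \<in> S}" by auto
  ultimately have "card ?I \<le> card {t. z + t *\<^sub>R e \<in> S}"
    using fin by (rule card_inj_on_le)
  then show "card ?I \<le> N" using card[of z] by linarith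
qed

lemma negligible_if_line_sections_bounded:
  fixes S :: "(real^'n) set" and e :: "real^'n"
  assumes S: "S \<in> sets borel" and e: "\<And>i. e$i \<ge> 0"
    and fin: "\<And>z. finite {t. z + t *\<^sub>R e \<in> S}" and card: "\<And>z. card {t. z + t *\<^sub>R e \<in> S} \<le> N"
  shows "negligible S"
proof -
  have "negligible (S \<inter> cbox a b)" for a b
  proof -
    have "S \<in> sets lebesgue" using S by (metis sets_lborel sets_completionI_sets)
    then have T: "S \<inter> cbox a b \<in> lmeasurable"
      by (intro bounded_set_imp_lmeasurable bounded_Int sets.Int) auto
    let ?C = "measure lebesgue (cbox a (b + e))"
    have "measure lebesgue (S \<inter> cbox a b) \<le> 0"
    proof (rule field_le_epsilon)
      fix \<epsilon> :: real assume "\<epsilon> > 0"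
      obtain K :: nat where K: "real N * ?C / \<epsilon> < real K"
        using reals_Archimedean2 by blast
      moreover have "0 \<le> real N * ?C / \<epsilon>" using \<open>\<epsilon> > 0\<close> by simp
      ultimately have "K > 0" by linarith
      have "real N * ?C < real K * \<epsilon>"
        using K \<open>\<epsilon> > 0\<close> by (simp add: divide_less_eq mult.commute)
      with measure_le_if_line_sections_bounded[OF T e fin card \<open>K > 0\<close>]
      have "real K * measure lebesgue (S \<inter> cbox a b) < real K * \<epsilon>" by linarith
      then show "measure lebesgue (S \<inter> cbox a b) \<le> 0 + \<epsilon>" using \<open>K > 0\<close> by simp
    qed
    then have "measure lebesgue (S \<inter> cbox a b) = 0"
      using measure_nonneg[of lebesgue "S \<inter> cbox a b"] by linarith
    with negligible_iff_measure0[OF T] show ?thesis by simp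
  qed
  then show ?thesis by (subst negligible_on_intervals) auto
qed

lemma negligible_poly_root_set:
  fixes p :: "real^'n \<Rightarrow> real poly" and S :: "(real^'n) set"
  assumes S: "S \<in> sets borel"
    and root: "\<And>z. z \<in> S \<Longrightarrow> p z \<noteq> 0 \<and> poly (p z) (z$j) = 0"
    and const: "\<And>z t. p (z + t *\<^sub>R axis j 1) = p z"
    and deg: "\<And>z. degree (p z) \<le> N"
  shows "negligible S"
  using S
proof (rule negligible_if_line_sections_bounded)
  show "0 \<le> axis j (1::real) $ i" for i by (simp add: axis_def)
  fix z :: "real^'n"
  have line_in_roots: "{t. z + t *\<^sub>R axis j 1 \<in> S} \<subseteq> (\<lambda>u. u - z$j) ` {u. poly (p z) u = 0}"
    if "p z \<noteq> 0"
  proof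
    fix t assume "t \<in> {t. z + t *\<^sub>R axis j 1 \<in> S}"
    moreover have "(z + t *\<^sub>R axis j 1) $ j = z$j + t" by (simp add: axis_def)
    ultimately have "poly (p z) (z$j + t) = 0"
      using root[of "z + t *\<^sub>R axis j 1"] by (simp add: const)
    then show "t \<in> (\<lambda>u. u - z$j) ` {u. poly (p z) u = 0}"
      by (intro image_eqI[of _ _ "z$j + t"]) auto
  qed
  have empty: "{t. z + t *\<^sub>R axis j 1 \<in> S} = {}" if "p z = 0"
    using root[of "z + _ *\<^sub>R axis j 1"] that by (auto simp: const)
  show "finite {t. z + t *\<^sub>R axis j 1 \<in> S}"
  proof (cases "p z = 0")
    case True
    then show ?thesis by (simp add: empty)
  qed (use line_in_roots poly_roots_finite in \<open>blast intro: finite_subset\<close>)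
  show "card {t. z + t *\<^sub>R axis j 1 \<in> S} \<le> N"
  proof (cases "p z = 0")
    case True
    then show ?thesis by (simp add: empty)
  next
    case False
    then have "card {t. z + t *\<^sub>R axis j 1 \<in> S} \<le> card ((\<lambda>u. u - z$j) ` {u. poly (p z) u = 0})"
      using line_in_roots poly_roots_finite by (intro card_mono) auto
    also have "\<dots> \<le> card {u. poly (p z) u = 0}" by (rule card_image_le) (use False poly_roots_finite in auto)
    also have "\<dots> \<le> degree (p z)" by (rule card_poly_roots_bound[OF False])
    finally show ?thesis using deg[of z] by linarith
  qed
qed

section \<open>Genericity of the sample\<close>

text \<open>The sample covariance matrix when the first observation is \<open>z\<close> and the remaining ones
  have scatter matrix \<open>\<alpha>\<close>.\<close>
definition cov_from_first :: "real \<Rightarrow> ('p \<Rightarrow> 'p \<Rightarrow> real) \<Rightarrow> real^'p \<Rightarrow> 'p \<times> 'p \<Rightarrow> real" where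
  "cov_from_first m \<alpha> z a = (z$fst a * z$snd a + \<alpha> (fst a) (snd a)) / m"

text \<open>\<open>m\<^sup>2 \<cdot> det2\<close> and \<open>m\<^sup>3 \<cdot> score_numer\<close> of \<^const>\<open>cov_from_first\<close> as polynomials in the coordinate
  \<open>z$j\<close>; their leading coefficients \<open>\<alpha> k k\<close> and \<open>\<alpha> k k \<cdot> z$k\<close> do not involve \<open>z$j\<close>.\<close>
definition det2_poly :: "('p \<Rightarrow> 'p \<Rightarrow> real) \<Rightarrow> real^'p \<Rightarrow> 'p \<Rightarrow> 'p \<Rightarrow> real poly" where
  "det2_poly \<alpha> z j k = [:\<alpha> j j * (z$k)\<^sup>2 + \<alpha> j j * \<alpha> k k - (\<alpha> j k)\<^sup>2, - 2 * \<alpha> j k * z$k, \<alpha> k k:]"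

definition score_numer_poly :: "real \<Rightarrow> ('p \<Rightarrow> 'p \<Rightarrow> real) \<Rightarrow> real^'p \<Rightarrow> 'p \<Rightarrow> 'p \<Rightarrow> real poly" where
  "score_numer_poly m \<alpha> z j k =
     [:\<alpha> j k * (\<alpha> j j * (z$k)\<^sup>2 + \<alpha> j j * \<alpha> k k - (\<alpha> j k)\<^sup>2) - m * \<alpha> j j * \<alpha> j k * (z$k)\<^sup>2,
       z$k * (\<alpha> j j * (z$k)\<^sup>2 + \<alpha> j j * \<alpha> k k - (\<alpha> j k)\<^sup>2) - 2 * (\<alpha> j k)\<^sup>2 * z$k
         + m * \<alpha> j j * \<alpha> k k * z$k + m * (\<alpha> j k)\<^sup>2 * z$k,
       - 2 * \<alpha> j k * (z$k)\<^sup>2 + \<alpha> j k * \<alpha> k k - m * \<alpha> k k * \<alpha> j k,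
       \<alpha> k k * z$k:]"

lemma poly_det2_poly:
  assumes "m \<noteq> 0"
  shows "poly (det2_poly \<alpha> z j k) (z$j) = m\<^sup>2 * det2 (cov_from_first m \<alpha> z) j k"
  using assms
  by (simp add: det2_poly_def det2_def cov_from_first_def field_simps power2_eq_square)

lemma poly_score_numer_poly:
  assumes "m \<noteq> 0"
  shows "poly (score_numer_poly m \<alpha> z j k) (z$j) = m^3 * score_numer (cov_from_first m \<alpha> z) z j k"
  using assms
  by (simp add: score_numer_poly_def score_numer_def det2_def cov_from_first_def field_simps
      power2_eq_square power3_eq_cube)

lemma det2_poly_translate: "j \<noteq> k \<Longrightarrow> det2_poly \<alpha> (z + t *\<^sub>R axis j 1) j k = det2_poly \<alpha> z j k"
  by (simp add: det2_poly_def axis_def)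

lemma score_numer_poly_translate:
  "j \<noteq> k \<Longrightarrow> score_numer_poly m \<alpha> (z + t *\<^sub>R axis j 1) j k = score_numer_poly m \<alpha> z j k"
  by (simp add: score_numer_poly_def axis_def)

lemma negligible_diag_degenerate:
  assumes "m \<noteq> 1"
  shows "negligible {z::real^'n. (m - 1) * (z$j)\<^sup>2 = a}"
proof (rule negligible_poly_root_set[where p = "\<lambda>_. [:- a, 0, m - 1:]" and j = j and N = 2])
  have "{z \<in> space borel. (m - 1) * (z$j)\<^sup>2 = a} \<in> sets borel" by measurable
  then show "{z::real^'n. (m - 1) * (z$j)\<^sup>2 = a} \<in> sets borel" by simp
qed (use assms in \<open>auto simp: degree_pCons_le algebra_simps power2_eq_square\<close>)

lemma negligible_det2_zero:
  assumes "j \<noteq> k" and "m \<noteq> 0" and "\<alpha> k k \<noteq> 0"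
  shows "negligible {z. det2 (cov_from_first m \<alpha> z) j k = 0}"
proof (rule negligible_poly_root_set[where p = "\<lambda>z. det2_poly \<alpha> z j k" and j = j and N = 2])
  have "{z \<in> space borel. det2 (cov_from_first m \<alpha> z) j k = 0} \<in> sets borel"
    unfolding det2_def cov_from_first_def by measurable
  then show "{z. det2 (cov_from_first m \<alpha> z) j k = 0} \<in> sets borel" by simp
  show "det2_poly \<alpha> z j k \<noteq> 0 \<and> poly (det2_poly \<alpha> z j k) (z$j) = 0"
    if "z \<in> {z. det2 (cov_from_first m \<alpha> z) j k = 0}" for z
  proof
    show "det2_poly \<alpha> z j k \<noteq> 0" using assms(3) by (auto simp: det2_poly_def)
    show "poly (det2_poly \<alpha> z j k) (z$j) = 0" using that assms(2) by (simp add: poly_det2_poly)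
  qed
  show "det2_poly \<alpha> (z + t *\<^sub>R axis j 1) j k = det2_poly \<alpha> z j k" for z t
    using assms(1) by (simp add: det2_poly_translate)
  show "degree (det2_poly \<alpha> z j k) \<le> 2" for z
    by (simp add: det2_poly_def degree_pCons_le)
qed

lemma negligible_score_numer_zero:
  assumes "j \<noteq> k" and "m \<noteq> 0" and "\<alpha> k k \<noteq> 0"
  shows "negligible {z. z$k \<noteq> 0 \<and> score_numer (cov_from_first m \<alpha> z) z j k = 0}"
proof (rule negligible_poly_root_set[where p = "\<lambda>z. score_numer_poly m \<alpha> z j k" and j = j and N = 3])
  have "{z \<in> space borel. z$k \<noteq> 0 \<and> score_numer (cov_from_first m \<alpha> z) z j k = 0} \<in> sets borel"
    unfolding score_numer_def det2_def cov_from_first_def by measurable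
  then show "{z. z$k \<noteq> 0 \<and> score_numer (cov_from_first m \<alpha> z) z j k = 0} \<in> sets borel" by simp
  show "score_numer_poly m \<alpha> z j k \<noteq> 0 \<and> poly (score_numer_poly m \<alpha> z j k) (z$j) = 0"
    if "z \<in> {z. z$k \<noteq> 0 \<and> score_numer (cov_from_first m \<alpha> z) z j k = 0}" for z
  proof
    show "score_numer_poly m \<alpha> z j k \<noteq> 0"
      using that assms(3) by (auto simp: score_numer_poly_def)
    show "poly (score_numer_poly m \<alpha> z j k) (z$j) = 0"
      using that assms(2) by (simp add: poly_score_numer_poly)
  qed
  show "score_numer_poly m \<alpha> (z + t *\<^sub>R axis j 1) j k = score_numer_poly m \<alpha> z j k" for z t
    using assms(1) by (simp add: score_numer_poly_translate)
  show "degree (score_numer_poly m \<alpha> z j k) \<le> 3" for z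
    by (simp add: score_numer_poly_def degree_pCons_le)
qed

lemma negligible_nongeneric:
  fixes \<alpha> :: "'p::{finite,linorder} \<Rightarrow> 'p \<Rightarrow> real"
  assumes m: "m > 1" and \<alpha>: "\<And>j. \<alpha> j j > 0"
  shows "negligible {z. \<not> generic (cov_from_first m \<alpha> z) z}"
proof -
  let ?S = "cov_from_first m \<alpha>"
  have "{z. \<not> generic (?S z) z} \<subseteq> (\<Union>j. {z. (m - 1) * (z$j)\<^sup>2 = \<alpha> j j}) \<union> (\<Union>k. {z. z$k = 0})
      \<union> (\<Union>(j, k)\<in>offdiag_idx. {z. det2 (?S z) j k = 0})
      \<union> (\<Union>(j, k)\<in>offdiag_idx. {z. z$k \<noteq> 0 \<and> score_numer (?S z) z j k = 0})"
    (is "_ \<subseteq> ?cover")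
  proof
    fix z assume "z \<in> {z. \<not> generic (?S z) z}"
    moreover have "?S z (j, j) > 0" for j
      using \<alpha>[of j] m by (simp add: cov_from_first_def add_nonneg_pos)
    moreover have "(z$j)\<^sup>2 = ?S z (j, j) \<longleftrightarrow> (m - 1) * (z$j)\<^sup>2 = \<alpha> j j" for j
      using m by (simp add: cov_from_first_def power2_eq_square field_simps)
    ultimately show "z \<in> ?cover" by (auto simp: generic_def)
  qed
  moreover have "negligible ?cover"
    using m \<alpha>[THEN less_imp_neq, symmetric]
    by (intro negligible_Un negligible_Union finite_imageI)
      (auto intro: negligible_diag_degenerate negligible_standard_hyperplane_cart
        negligible_det2_zero negligible_score_numer_zero)
  ultimately show ?thesis by (rule negligible_subset[rotated])
qed

lemma AE_avoids_negligible:
  fixes \<mu> :: "'a::euclidean_space measure"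
  assumes ac: "absolutely_continuous lborel \<mu>" and sets: "sets \<mu> = sets borel"
    and B: "B \<in> sets borel" and negl: "negligible B"
  shows "AE x in \<mu>. x \<notin> B"
proof (rule AE_not_in)
  have "B \<in> null_sets lborel"
    using negl B null_sets_completion_iff[of B lborel] by (simp add: negligible_iff_null_sets)
  then show "B \<in> null_sets \<mu>"
    using ac sets by (auto simp: absolutely_continuous_def null_sets_def)
qed

lemma (in prob_space) AE_indep_avoids_null_sections:
  assumes indep: "indep_var N Y K X"
    and meas: "{p \<in> space (N \<Otimes>\<^sub>M K). snd p \<in> B (fst p)} \<in> sets (N \<Otimes>\<^sub>M K)"
    and null: "\<And>y. y \<in> space N \<Longrightarrow> AE x in distr M K X. x \<notin> B y"
  shows "AE \<omega> in M. X \<omega> \<notin> B (Y \<omega>)"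
proof -
  have Y: "random_variable N Y" and X: "random_variable K X"
    using indep by (auto dest: indep_var_rv1 indep_var_rv2)
  have joint: "distr M N Y \<Otimes>\<^sub>M distr M K X = distr M (N \<Otimes>\<^sub>M K) (\<lambda>\<omega>. (Y \<omega>, X \<omega>))"
    using indep indep_var_distribution_eq by blast
  interpret Y: prob_space "distr M N Y" using Y by (rule prob_space_distr)
  interpret X: prob_space "distr M K X" using X by (rule prob_space_distr)
  interpret pair_prob_space "distr M N Y" "distr M K X" ..
  have "AE y in distr M N Y. AE x in distr M K X. x \<notin> B y"
    using null by (rule AE_I2) simp
  then have "AE p in distr M N Y \<Otimes>\<^sub>M distr M K X. snd p \<notin> B (fst p)"
    using sets.sets_Collect_neg[OF meas]
    by (intro AE_pair_measure) (simp_all add: space_pair_measure cong: sets_pair_measure_cong)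
  then have "AE p in distr M (N \<Otimes>\<^sub>M K) (\<lambda>\<omega>. (Y \<omega>, X \<omega>)). snd p \<notin> B (fst p)"
    unfolding joint[symmetric] .
  then show ?thesis
    using meas X Y by (subst (asm) AE_distr_iff) auto
qed

definition scatter_rest :: "nat \<Rightarrow> (nat \<Rightarrow> real^'p) \<Rightarrow> 'p \<Rightarrow> 'p \<Rightarrow> real" where
  "scatter_rest n x j k = (\<Sum>i\<in>{1..<n}. x i $ j * x i $ k)"

lemma Smat_eq_cov_from_first:
  assumes "n \<ge> 1" and "a \<in> idx"
  shows "Smat n x a = cov_from_first (real n) (scatter_rest n x) (x 0) a"
proof -
  have "{..<n} = insert 0 {1..<n}" using assms(1) by auto
  then show ?thesis using assms(2) by (simp add: Smat_def cov_from_first_def scatter_rest_def)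
qed

lemma generic_cong:
  assumes "\<And>a. a \<in> idx \<Longrightarrow> S a = S' a"
  shows "generic S z \<longleftrightarrow> generic S' z"
proof -
  have "S (j, k) = S' (j, k)" if "j \<le> k" for j k using assms that by (simp add: idx_def)
  then show ?thesis by (auto simp: generic_def det2_def score_numer_def less_imp_le)
qed

declare borel_measurable_nth[measurable]

lemma pred_generic[measurable]:
  fixes z :: "'a \<Rightarrow> real^'p::{finite,linorder}"
  assumes [measurable]: "\<And>a. (\<lambda>x. S x a) \<in> borel_measurable M" and [measurable]: "z \<in> borel_measurable M"
  shows "Measurable.pred M (\<lambda>x. generic (S x) (z x))"
  unfolding generic_def det2_def score_numer_def by measurable

lemma (in prob_space) AE_nonzero_coordinates:
  fixes Z :: "'a \<Rightarrow> real^'n"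
  assumes Z: "random_variable borel Z" and ac: "absolutely_continuous lborel (distr M borel Z)"
  shows "AE \<omega> in M. \<forall>j. Z \<omega> $ j \<noteq> 0"
proof -
  have H: "{z::real^'n. \<exists>j. z$j = 0} \<in> sets borel" by measurable
  have "{z::real^'n. \<exists>j. z$j = 0} = (\<Union>j. {z. z$j = 0})" by auto
  then have "negligible {z::real^'n. \<exists>j. z$j = 0}"
    by (auto intro: negligible_standard_hyperplane_cart)
  with ac H have "AE z in distr M borel Z. z \<notin> {z. \<exists>j. z$j = 0}"
    by (intro AE_avoids_negligible) auto
  then show ?thesis using Z H by (subst (asm) AE_distr_iff) auto
qed

lemma (in prob_space) AE_first_generic:
  fixes X :: "nat \<Rightarrow> 'a \<Rightarrow> real^'p::{finite,linorder}"
  assumes n: "n \<ge> 2" and meas: "\<And>i. X i \<in> borel_measurable M"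
    and indep: "indep_vars (\<lambda>_. borel) X {..<n}"
    and ac: "absolutely_continuous lborel (distr M borel (X 0))"
  shows "AE \<omega> in M. (\<forall>j. scatter_rest n (\<lambda>i. X i \<omega>) j j > 0) \<longrightarrow>
           generic (cov_from_first (real n) (scatter_rest n (\<lambda>i. X i \<omega>)) (X 0 \<omega>)) (X 0 \<omega>)"
proof -
  define N where "N = PiM {1..<n} (\<lambda>_. borel :: (real^'p::{finite,linorder}) measure)"
  define Y where "Y \<omega> = restrict (\<lambda>i. X i \<omega>) {1..<n}" for \<omega>
  define B :: "(nat \<Rightarrow> real^'p::{finite,linorder}) \<Rightarrow> (real^'p::{finite,linorder}) set"
    where "B y = {z. (\<forall>j. scatter_rest n y j j > 0) \<and>
      \<not> generic (cov_from_first (real n) (scatter_rest n y) z) z}" for y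
  have B: "B y \<in> sets borel" for y
    unfolding B_def cov_from_first_def by measurable
  have "negligible (B y)" for y
  proof (cases "\<forall>j. scatter_rest n y j j > 0")
    case True
    with n show ?thesis using negligible_nongeneric[of "real n" "scatter_rest n y"] by (simp add: B_def)
  next
    case False
    then have "B y = {}" by (auto simp: B_def)
    then show ?thesis by simp
  qed
  then have "AE z in distr M borel (X 0). z \<notin> B y" for y
    using ac B by (intro AE_avoids_negligible) auto
  then have null: "AE \<omega> in M. X 0 \<omega> \<notin> B y" for y
    using meas B by (subst (asm) AE_distr_iff) auto
  \<comment> \<open>\<^const>\<open>indep_var\<close> needs both variables to take values in the same type\<close>
  define X0 where "X0 \<omega> = restrict (\<lambda>i. X i \<omega>) {0}" for \<omega>
  have indep0: "indep_var N Y (PiM {0} (\<lambda>_. borel)) X0"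
    unfolding N_def Y_def X0_def by (rule indep_var_restrict[OF indep]) (use n in auto)
  have "AE \<omega> in M. X0 \<omega> \<notin> {f. f 0 \<in> B (Y \<omega>)}"
  proof (rule AE_indep_avoids_null_sections[OF indep0])
    show "{p \<in> space (N \<Otimes>\<^sub>M PiM {0} (\<lambda>_. borel)). snd p \<in> {f. f 0 \<in> B (fst p)}}
        \<in> sets (N \<Otimes>\<^sub>M PiM {0} (\<lambda>_. borel))"
      unfolding B_def cov_from_first_def scatter_rest_def N_def by measurable
    show "AE f in distr M (PiM {0} (\<lambda>_. borel)) X0. f \<notin> {f. f 0 \<in> B y}" for y
      using null[of y] indep_var_rv2[OF indep0] B by (subst AE_distr_iff) (auto simp: X0_def)
  qed
  moreover have "scatter_rest n (Y \<omega>) = scatter_rest n (\<lambda>i. X i \<omega>)" for \<omega>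
    by (auto simp: scatter_rest_def Y_def fun_eq_iff intro!: sum.cong)
  ultimately show ?thesis by (simp add: X0_def B_def) (auto elim: eventually_mono)
qed

lemma AE_generic_sample:
  fixes M :: "'a measure" and X :: "nat \<Rightarrow> 'a \<Rightarrow> real^'p::{finite,linorder}"
  assumes "prob_space M" and n: "n \<ge> 2"
    and meas: "\<And>i. X i \<in> borel_measurable M"
    and indep: "prob_space.indep_vars M (\<lambda>_. borel) X {..<n}"
    and distr: "\<And>i. i < n \<Longrightarrow> distr M borel (X i) = distr M borel (X 0)"
    and ac: "absolutely_continuous lborel (distr M lborel (X 0))"
  shows "AE \<omega> in M. generic (Smat n (\<lambda>i. X i \<omega>)) (X 0 \<omega>)"
proof -
  interpret prob_space M by fact
  have ac0: "absolutely_continuous lborel (distr M borel (X 0))"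
    using ac by (simp add: distr_cong[OF refl sets_lborel[symmetric]])
  have "distr M borel (X 1) = distr M borel (X 0)" using n by (intro distr) simp
  with ac0 meas have "AE \<omega> in M. \<forall>j. X 1 \<omega> $ j \<noteq> 0"
    by (intro AE_nonzero_coordinates) simp_all
  with AE_first_generic[OF n meas indep ac0] show ?thesis
  proof eventually_elim
    case (elim \<omega>)
    \<comment> \<open>the second observation makes the scatter of the others positive on the diagonal\<close>
    have "scatter_rest n (\<lambda>i. X i \<omega>) j j > 0" for j
    proof -
      have "X 1 \<omega> $ j \<noteq> 0" using elim(2) by blast
      then have "0 < X 1 \<omega> $ j * X 1 \<omega> $ j" using not_real_square_gt_zero by blast
      also have "\<dots> \<le> scatter_rest n (\<lambda>i. X i \<omega>) j j"
        unfolding scatter_rest_def using n by (intro member_le_sum) auto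
      finally show ?thesis .
    qed
    with elim(1) show ?case
      using n by (subst generic_cong[OF Smat_eq_cov_from_first]) auto
  qed
qed

theorem theorem1:
  fixes M :: "'a measure" and X :: "nat \<Rightarrow> 'a \<Rightarrow> real^'p::{finite,linorder}"
    and n :: nat and lam :: real
  assumes "prob_space M"
    and "n \<ge> 2" and "lam \<ge> 0"
    and "\<And>i. X i \<in> borel_measurable M"
    and "prob_space.indep_vars M (\<lambda>_. borel) X {..<n}"
    and "\<And>i. i < n \<Longrightarrow> distr M borel (X i) = distr M borel (X 0)"
    and "absolutely_continuous lborel (distr M lborel (X 0))"
    and "\<And>j. integrable M (\<lambda>\<omega>. (X 0 \<omega> $ j)^2)"
    and "\<And>j. integrable M (\<lambda>\<omega>. X 0 \<omega> $ j) \<and> (\<integral>\<omega>. X 0 \<omega> $ j \<partial>M) = 0"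
    and "\<And>v :: real^'p::{finite,linorder}. v \<noteq> 0 \<Longrightarrow>
           (\<Sum>j\<in>UNIV. \<Sum>k\<in>UNIV. v$j * v$k * (\<integral>\<omega>. X 0 \<omega> $ j * X 0 \<omega> $ k \<partial>M)) > 0"
  shows "AE \<omega> in M. \<exists>w.
           is_minimizer lam n (\<lambda>i. X i \<omega>) w \<and>
           (\<forall>v. is_minimizer lam n (\<lambda>i. X i \<omega>) v \<longrightarrow> v = w) \<and>
           (\<exists>\<eta>. is_subgrad n (\<lambda>i. X i \<omega>) w \<eta> \<and>
              (let E = Ehat lam n (\<lambda>i. X i \<omega>) w; J = Jhat n (\<lambda>i. X i \<omega>) in
                invertible_on E J \<and>
                (\<forall>a\<in>E. w a = (\<Sum>b\<in>E. mat_inv_on E J a b * (J b b - (lam / real n) * \<eta> b))) \<and>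
                (\<forall>a\<in>idx - E. w a = 0)))"
proof -
  have "AE \<omega> in M. generic (Smat n (\<lambda>i. X i \<omega>)) (X 0 \<omega>)"
    using assms(1,2,4-7) by (rule AE_generic_sample)
  then show ?thesis
    by (rule eventually_mono)
      (rule unique_minimizer_closed_form[OF generic_imp_pos_def]; use assms(2,3) in auto)
qed

end
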